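(* For every $n\ge 1$, the sensitivity to synchronism of elementary cellular automaton rule $200$ satisfies $\mu(f_{200,n})=\dfrac{1}{3^n-2^{n+1}+2}$.
   Context: Cells are indexed by $\mathbb{Z}_n=\{0,\dots,n-1\}$, indices modulo $n$. Rule $200$ has local rule $r_{200}(x_1,x_2,x_3)=x_2\wedge(x_1\vee x_3)$, and global function $f_{200,n}(x)_i=r_{200}(x_{i-1},x_i,x_{i+1})$. An update schedule is an ordered partition $\Delta=(\Delta_1,\dots,\Delta_k)$ of $\mathbb{Z}_n$ into nonempty blocks; $\mathcal{P}_n$ is the set of them. For a block $B$ let $f^{(B)}(x)_i=f_{200,n}(x)_i$ if $i\in B$ and $x_i$ otherwise; $f^{(\Delta)}_{200,n}=f^{(\Delta_k)}\circ\cdots\circ f^{(\Delta_1)}$. The dynamics of $\Delta$ is the transition digraph with arcs $(x,f^{(\Delta)}_{200,n}(x))$; $\mathcal{D}(f_{200,n})$ is the set of distinct dynamics over $\Delta\in\mathcal{P}_n$ (equivalently, the number of distinct maps $f^{(\Delta)}_{200,n}$). The sensitivity to synchronism is $\mu(f_{200,n})=|\mathcal{D}(f_{200,n})|/(3^n-2^{n+1}+2)$. *)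

theory Defs
  imports Complex_Main "HOL-Library.FuncSet"
begin

definition r200 :: "bool \<Rightarrow> bool \<Rightarrow> bool \<Rightarrow> bool" where
  "r200 x1 x2 x3 = (x2 \<and> (x1 \<or> x3))"

definition f200 :: "nat \<Rightarrow> bool list \<Rightarrow> bool list" where
  "f200 n x = map (\<lambda>i. r200 (x ! ((i + n - 1) mod n)) (x ! i) (x ! ((i + 1) mod n))) [0..<n]"

definition block_update :: "nat \<Rightarrow> nat set \<Rightarrow> bool list \<Rightarrow> bool list" where
  "block_update n B x = map (\<lambda>i. if i \<in> B then f200 n x ! i else x ! i) [0..<n]"

definition ordered_partitions :: "nat \<Rightarrow> nat set list set" where
  "ordered_partitions n = {D. (\<forall>B\<in>set D. B \<noteq> {}) \<and> \<Union>(set D) = {..<n} \<and>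
     (\<forall>i<length D. \<forall>j<length D. i \<noteq> j \<longrightarrow> D ! i \<inter> D ! j = {})}"

text \<open>f^(Delta) = f^(Delta_k) o ... o f^(Delta_1) (fold applies the first block first).\<close>
definition async_update :: "nat \<Rightarrow> nat set list \<Rightarrow> bool list \<Rightarrow> bool list" where
  "async_update n D = fold (block_update n) D"

definition configs :: "nat \<Rightarrow> bool list set" where
  "configs n = {x. length x = n}"

text \<open>Distinct dynamics = distinct maps on the configuration space.\<close>
definition dynamics200 :: "nat \<Rightarrow> (bool list \<Rightarrow> bool list) set" where
  "dynamics200 n = (\<lambda>D. restrict (async_update n D) (configs n)) ` ordered_partitions n"

definition mu200 :: "nat \<Rightarrow> real" where
  "mu200 n = real (card (dynamics200 n)) / (3 ^ n - 2 ^ (n + 1) + 2)"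

end

theory Submission
  imports Defs
begin

text \<open>Rule 200 only erases isolated ones, and a one that survives has a neighbouring one that
  survives as well. Hence applying the global map to a configuration in which an arbitrary set
  of cells has already been updated gives the same result as applying it to the original one.
  By induction over the blocks, every block-sequential schedule computes exactly the parallel
  map, so rule 200 has a single dynamics.\<close>

lemma r200_mixed_neighbourhood:
  assumes "a' \<in> {a, r200 z a b}" and "b' \<in> {b, r200 a b c}" and "c' \<in> {c, r200 b c d}"
  shows "r200 a' b' c' = r200 a b c"
  using assms by (auto simp: r200_def)

lemma right_neighbour_of_left_neighbour:
  "i < (n::nat) \<Longrightarrow> ((i + n - 1) mod n + 1) mod n = i"
  by (cases i) (auto simp: mod_Suc)

lemma left_neighbour_of_right_neighbour:
  "i < (n::nat) \<Longrightarrow> ((i + 1) mod n + n - 1) mod n = i"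
  by (cases "Suc i = n") auto

lemma length_f200 [simp]: "length (f200 n x) = n"
  by (simp add: f200_def)

lemma nth_f200:
  "i < n \<Longrightarrow> f200 n x ! i = r200 (x ! ((i + n - 1) mod n)) (x ! i) (x ! ((i + 1) mod n))"
  by (simp add: f200_def)

lemma length_block_update [simp]: "length (block_update n B x) = n"
  by (simp add: block_update_def)

lemma nth_block_update:
  "i < n \<Longrightarrow> block_update n B x ! i = (if i \<in> B then f200 n x ! i else x ! i)"
  by (simp add: block_update_def)

lemma block_update_empty: "length x = n \<Longrightarrow> block_update n {} x = x"
  by (rule nth_equalityI) (auto simp: nth_block_update)

lemma block_update_all: "block_update n {..<n} x = f200 n x"
  by (rule nth_equalityI) (auto simp: nth_block_update)

lemma f200_block_update: "f200 n (block_update n B x) = f200 n x"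
proof (rule nth_equalityI)
  fix i assume "i < length (f200 n (block_update n B x))"
  then have i: "i < n" by simp
  define y where "y = block_update n B x"
  define l r where "l = (i + n - 1) mod n" and "r = (i + 1) mod n"
  have l: "l < n" and r: "r < n" using i by (simp_all add: l_def r_def)
  have "(l + 1) mod n = i" "(r + n - 1) mod n = i"
    unfolding l_def r_def using i
    by (rule right_neighbour_of_left_neighbour, rule left_neighbour_of_right_neighbour)
  then have "y ! l \<in> {x ! l, r200 (x ! ((l + n - 1) mod n)) (x ! l) (x ! i)}"
    and "y ! i \<in> {x ! i, r200 (x ! l) (x ! i) (x ! r)}"
    and "y ! r \<in> {x ! r, r200 (x ! i) (x ! r) (x ! ((r + 1) mod n))}"
    using i l r by (auto simp: y_def nth_block_update nth_f200 l_def r_def)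
  then have "r200 (y ! l) (y ! i) (y ! r) = r200 (x ! l) (x ! i) (x ! r)"
    by (rule r200_mixed_neighbourhood)
  then show "f200 n y ! i = f200 n x ! i"
    using i by (simp add: nth_f200 l_def r_def)
qed simp

lemma block_update_block_update:
  "block_update n B (block_update n S x) = block_update n (S \<union> B) x"
  by (rule nth_equalityI) (auto simp: nth_block_update f200_block_update)

lemma fold_block_update:
  "fold (block_update n) D (block_update n S x) = block_update n (S \<union> \<Union>(set D)) x"
  by (induction D arbitrary: S) (simp_all add: block_update_block_update Un_assoc)

lemma async_update_eq_f200:
  assumes "length x = n" and "D \<in> ordered_partitions n"
  shows "async_update n D x = f200 n x"
proof -
  have "\<Union>(set D) = {..<n}" using assms(2) by (simp add: ordered_partitions_def)
  then show ?thesis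
    using fold_block_update[of n D "{}" x]
    by (simp add: async_update_def block_update_empty[OF assms(1)] block_update_all)
qed

lemma dynamics200_eq:
  assumes "n \<ge> 1"
  shows "dynamics200 n = {restrict (f200 n) (configs n)}"
proof -
  have "[{..<n}] \<in> ordered_partitions n"
    using assms by (auto simp: ordered_partitions_def lessThan_empty_iff)
  moreover have "restrict (async_update n D) (configs n) = restrict (f200 n) (configs n)"
    if "D \<in> ordered_partitions n" for D
    using that by (intro restrict_ext) (simp add: configs_def async_update_eq_f200)
  ultimately show ?thesis
    unfolding dynamics200_def by (auto intro!: image_eqI)
qed

theorem mainTheorem2:
  fixes n :: nat
  assumes "n \<ge> 1"
  shows "mu200 n = 1 / (3 ^ n - 2 ^ (n + 1) + 2)"
  unfolding mu200_def dynamics200_eq[OF assms] by simp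

end
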